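(* Let $S=\mathbb{Z}[x_0,\dots,x_d]$, fix a prime $p>0$, and let $f(\boldsymbol{x})=g(\boldsymbol{x})+p\,h(\boldsymbol{x})\in S$, where for some fixed integer $m<d$ one has $g(\boldsymbol{x})\in(x_0,\dots,x_m)S$ and $h(\boldsymbol{x})$ is a polynomial in $x_{m+1},\dots,x_d$ only. Set $R=S/(f(\boldsymbol{x}))$. Let $\Lambda_p$ be the ring endomorphism of $P_S=\mathbb{Z}[\boldsymbol{x},\boldsymbol{y}]$ with $\Lambda_p(x_i)=x_i^p$ and $\Lambda_p(y_i-x_i)=(y_i-x_i)^p$, and $\varphi_p(u)=(\Lambda_p(u)-u^p)/p$ for $u\in P_S$. If the local cohomology element \[ \left[\frac{\varphi_p(g(\boldsymbol{x}))}{(x_0\cdots x_m)^p}\right]\in H^{m+1}_{(x_0,\dots,x_m)}(R/pR) \] is nonzero, then so is \[ \left[\frac{\varphi_p\big(f(\boldsymbol{y})-f(\boldsymbol{x})\big)}{\prod_{i=0}^d(y_i-x_i)^p}\right]\in H^{d+1}_{\Delta_R}(P_R/pP_R). \]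
   Context: $P_R=R\otimes_{\mathbb{Z}}R$ is identified with $\mathbb{Z}[\boldsymbol{x},\boldsymbol{y}]/(f(\boldsymbol{x}),f(\boldsymbol{y}))$ ($x_i=x_i\otimes 1$, $y_i=1\otimes x_i$), and $\Delta_R$ is the ideal generated by $y_i-x_i$, $0\le i\le d$. Local cohomology classes are Čech classes of the images of the indicated numerators. *)

theory Defs
  imports Main "HOL-Library.Poly_Mapping" "HOL-Computational_Algebra.Primes"
begin

text \<open>Multivariate integer polynomials with variables indexed by type 'v:
  maps from monomials (exponent vectors, 'v =>0 nat) to integer coefficients.\<close>
type_synonym 'v mpoly = "('v \<Rightarrow>\<^sub>0 nat) \<Rightarrow>\<^sub>0 int"

definition Var :: "'v \<Rightarrow> 'v mpoly" where
  "Var v = Poly_Mapping.single (Poly_Mapping.single v 1) 1"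

definition vars :: "'v mpoly \<Rightarrow> 'v set" where
  "vars q = \<Union> (Poly_Mapping.keys ` Poly_Mapping.keys q)"

definition subst :: "('v \<Rightarrow> 'w mpoly) \<Rightarrow> 'v mpoly \<Rightarrow> 'w mpoly" where
  "subst \<sigma> q = (\<Sum>mo\<in>Poly_Mapping.keys q.
      of_int (Poly_Mapping.lookup q mo) * (\<Prod>v\<in>Poly_Mapping.keys mo. \<sigma> v ^ Poly_Mapping.lookup mo v))"

text \<open>P_S = Z[x,y]: variables Inl i = x_i, Inr i = y_i.\<close>
abbreviation xv :: "nat \<Rightarrow> (nat + nat) mpoly" where "xv i \<equiv> Var (Inl i)"
abbreviation yv :: "nat \<Rightarrow> (nat + nat) mpoly" where "yv i \<equiv> Var (Inr i)"

text \<open>Lambda_p: x_i |-> x_i^p, y_i |-> x_i^p + (y_i - x_i)^p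
  (so that y_i - x_i |-> (y_i - x_i)^p).\<close>
definition Lambda :: "nat \<Rightarrow> (nat + nat) mpoly \<Rightarrow> (nat + nat) mpoly" where
  "Lambda p = subst (\<lambda>v. case v of Inl i \<Rightarrow> xv i ^ p
                                 | Inr i \<Rightarrow> xv i ^ p + (yv i - xv i) ^ p)"

text \<open>phi_p(u) = (Lambda_p(u) - u^p)/p (exact division of integer coefficients).\<close>
definition phi :: "nat \<Rightarrow> (nat + nat) mpoly \<Rightarrow> (nat + nat) mpoly" where
  "phi p u = Poly_Mapping.map (\<lambda>c. c div int p) (Lambda p u - u ^ p)"

definition in_ideal :: "'v set \<Rightarrow> 'v mpoly set \<Rightarrow> 'v mpoly \<Rightarrow> bool" where
  "in_ideal V G q \<longleftrightarrow> (\<exists>c. (\<forall>g\<in>G. vars (c g) \<subseteq> V) \<and> q = (\<Sum>g\<in>G. c g * g))"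

text \<open>Vanishing of the Cech class [r/(a_1...a_n)^k] in the top local cohomology
  H^n_{(a_1..a_n)}(M), M = Z[V]/(G), computed by the Cech complex:
  H^n = M_A / sum_i image(M_{A/a_i}) with A = a_1...a_n.  The class is zero iff
  r/A^k = sum_i m_i/(A/a_i)^s = sum_i m_i a_i^s / A^s in M_A for some s and m_i,
  i.e. (equality in the localisation M_A) iff
  A^t (r A^s - A^k sum_i m_i a_i^s) = 0 in M for some t.\<close>
definition cech_top_class_zero ::
  "'v set \<Rightarrow> 'v mpoly set \<Rightarrow> 'v mpoly list \<Rightarrow> nat \<Rightarrow> 'v mpoly \<Rightarrow> bool" where
  "cech_top_class_zero V G as k r \<longleftrightarrow>
     (let A = prod_list as; n = length as in
      \<exists>s t ms. (\<forall>i<n. vars (ms i) \<subseteq> V) \<and>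
        in_ideal V G (A ^ t * (r * A ^ s - A ^ k * (\<Sum>i<n. ms i * (as ! i) ^ s))))"

end

theory Submission
  imports Defs
begin

text \<open>
  Suppose the class over \<open>P_R\<close> vanishes, i.e. for \<open>A = \<Prod>(y\<^sub>i - x\<^sub>i)\<close> and
  \<open>r = \<phi>\<^sub>p(f(y) - f(x))\<close> some \<open>A\<^sup>t (r A\<^sup>s - A\<^sup>p \<Sum> m\<^sub>i (y\<^sub>i - x\<^sub>i)\<^sup>s)\<close>
  lies in \<open>(f(x), f(y), p)\<close>. Substitute \<open>y\<^sub>i \<mapsto> x\<^sub>i\<close> and \<open>y\<^sub>i - x\<^sub>i \<mapsto> x\<^sub>i\<close> for
  \<open>i \<le> m\<close>, \<open>y\<^sub>i - x\<^sub>i \<mapsto> y\<^sub>i\<close> for \<open>i > m\<close>. As \<open>g \<in> (x\<^sub>0, \<dots>, x\<^sub>m)\<close>, this sends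
  \<open>f(y)\<close> to \<open>f(x)\<close> and \<open>f(x)\<close> to \<open>p h(x - y)\<close>, so the ideal becomes \<open>(f(x), p)\<close>,
  and \<open>A\<close> becomes \<open>X T\<close> with \<open>X = x\<^sub>0 \<cdots> x\<^sub>m\<close>, \<open>T = y\<^sub>m\<^sub>+\<^sub>1 \<cdots> y\<^sub>d\<close>.
  Now take the coefficient of \<open>T\<^sup>t\<^sup>+\<^sup>s\<close>, viewing everything as a polynomial in the
  \<open>y\<close>-variables over \<open>\<int>[x]\<close>. This is \<open>\<int>[x]\<close>-linear, hence preserves \<open>(f(x), p)\<close>;
  the summands with \<open>i > m\<close> disappear because their degree in \<open>y\<^sub>i\<close> is too large (as \<open>p > 0\<close>);
  and on \<open>r\<close> it is the above substitution followed by \<open>y \<mapsto> 0\<close>, which commutes with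
  \<open>\<Lambda>\<^sub>p\<close>, hence with \<open>\<phi>\<^sub>p\<close>, and maps \<open>f(y) - f(x)\<close> to \<open>g(x)\<close>. What is left is a
  certificate for the vanishing of \<open>[\<phi>\<^sub>p(g(x)) / X\<^sup>p]\<close>; sending all variables other than
  \<open>x\<^sub>0, \<dots>, x\<^sub>d\<close> to \<open>0\<close> makes its coefficients lie in \<open>\<int>[x\<^sub>0, \<dots>, x\<^sub>d]\<close>.
\<close>

section \<open>Substitution as a ring homomorphism\<close>

lemma of_int_mult_eq_frag_cmul:
  "(of_int c :: 'a::comm_monoid_add \<Rightarrow>\<^sub>0 int) * q = frag_cmul c q"
proof -
  have "(of_int c :: 'a \<Rightarrow>\<^sub>0 int) * q = Poly_Mapping.map ((*) c) q"
    by (simp add: mult_map_scale_conv_mult flip: single_of_int)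
  then show ?thesis
    by (intro poly_mapping_eqI) (simp add: Poly_Mapping.map.rep_eq when_def)
qed

definition subst_monomial :: "('v \<Rightarrow> 'w mpoly) \<Rightarrow> ('v \<Rightarrow>\<^sub>0 nat) \<Rightarrow> 'w mpoly" where
  "subst_monomial \<sigma> mo = (\<Prod>v\<in>Poly_Mapping.keys mo. \<sigma> v ^ Poly_Mapping.lookup mo v)"

lemma subst_eq_frag_extend: "subst \<sigma> q = frag_extend (subst_monomial \<sigma>) q"
  unfolding subst_def frag_extend_def subst_monomial_def by (simp add: of_int_mult_eq_frag_cmul)

lemma subst_monomial_superset:
  assumes "finite S" "Poly_Mapping.keys mo \<subseteq> S"
  shows "subst_monomial \<sigma> mo = (\<Prod>v\<in>S. \<sigma> v ^ Poly_Mapping.lookup mo v)"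
  unfolding subst_monomial_def
  by (rule prod.mono_neutral_left) (use assms in \<open>auto simp: in_keys_iff\<close>)

lemma subst_monomial_add: "subst_monomial \<sigma> (a + b) = subst_monomial \<sigma> a * subst_monomial \<sigma> b"
proof -
  let ?S = "Poly_Mapping.keys a \<union> Poly_Mapping.keys b"
  have "subst_monomial \<sigma> (a + b) = (\<Prod>v\<in>?S. \<sigma> v ^ Poly_Mapping.lookup (a + b) v)"
    by (rule subst_monomial_superset) (auto simp: keys_add)
  also have "\<dots> = (\<Prod>v\<in>?S. \<sigma> v ^ Poly_Mapping.lookup a v) * (\<Prod>v\<in>?S. \<sigma> v ^ Poly_Mapping.lookup b v)"
    by (simp add: lookup_add power_add prod.distrib)
  also have "\<dots> = subst_monomial \<sigma> a * subst_monomial \<sigma> b"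
    using subst_monomial_superset[of ?S a \<sigma>] subst_monomial_superset[of ?S b \<sigma>] by simp
  finally show ?thesis .
qed

lemma subst_frag_of [simp]: "subst \<sigma> (frag_of mo) = subst_monomial \<sigma> mo"
  by (simp add: subst_eq_frag_extend)

lemma subst_0 [simp]: "subst \<sigma> 0 = 0"
  by (simp add: subst_eq_frag_extend)

lemma subst_add [simp]: "subst \<sigma> (a + b) = subst \<sigma> a + subst \<sigma> b"
  by (simp add: subst_eq_frag_extend frag_extend_add)

lemma subst_diff [simp]: "subst \<sigma> (a - b) = subst \<sigma> a - subst \<sigma> b"
  by (simp add: subst_eq_frag_extend frag_extend_diff)

lemma subst_mult [simp]: "subst \<sigma> (a * b) = subst \<sigma> a * subst \<sigma> b"
proof -
  have monomial: "subst \<sigma> (frag_of mo * b) = subst_monomial \<sigma> mo * subst \<sigma> b" for mo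
    using subset_UNIV
    by (induction b rule: frag_induction) (simp_all add: mult_single subst_monomial_add right_diff_distrib)
  show ?thesis
    using subset_UNIV by (induction a rule: frag_induction) (simp_all add: monomial left_diff_distrib)
qed

lemma subst_1 [simp]: "subst \<sigma> 1 = 1"
  using subst_frag_of[of \<sigma> 0] by (simp add: subst_monomial_def)

lemma subst_Var [simp]: "subst \<sigma> (Var v) = \<sigma> v"
  by (simp add: Var_def subst_monomial_def)

lemma subst_of_nat [simp]: "subst \<sigma> (of_nat n) = of_nat n"
  by (induction n) simp_all

lemma subst_power [simp]: "subst \<sigma> (a ^ n) = subst \<sigma> a ^ n"
  by (induction n) simp_all

lemma subst_sum [simp]: "subst \<sigma> (\<Sum>i\<in>I. f i) = (\<Sum>i\<in>I. subst \<sigma> (f i))"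
  by (induction I rule: infinite_finite_induct) simp_all

lemma subst_prod [simp]: "subst \<sigma> (\<Prod>i\<in>I. f i) = (\<Prod>i\<in>I. subst \<sigma> (f i))"
  by (induction I rule: infinite_finite_induct) simp_all

lemma subst_prod_list: "subst \<sigma> (prod_list xs) = prod_list (map (subst \<sigma>) xs)"
  by (induction xs) simp_all

lemma subst_subst: "subst \<tau> (subst \<sigma> q) = subst (\<lambda>v. subst \<tau> (\<sigma> v)) q"
  using subset_UNIV by (induction q rule: frag_induction) (simp_all add: subst_monomial_def)

lemma Var_power: "Var v ^ n = frag_of (Poly_Mapping.single v n)"
  by (induction n) (simp_all add: Var_def mult_single add.commute flip: single_add)

lemma prod_frag_of: "(\<Prod>i\<in>I. frag_of (a i)) = frag_of (\<Sum>i\<in>I. a i)"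
  by (induction I rule: infinite_finite_induct) (simp_all add: mult_single)

lemma subst_monomial_Var: "subst_monomial Var mo = frag_of mo"
proof -
  have "(\<Sum>v\<in>Poly_Mapping.keys mo. Poly_Mapping.single v (Poly_Mapping.lookup mo v)) = mo"
    by (rule poly_mapping_eqI) (simp add: lookup_sum lookup_single when_def in_keys_iff)
  then show ?thesis
    by (simp add: subst_monomial_def Var_power prod_frag_of)
qed

lemma subst_Var_id [simp]: "subst Var q = q"
  using subset_UNIV by (induction q rule: frag_induction) (simp_all add: subst_monomial_Var)

lemma subst_cong:
  assumes "\<And>v. v \<in> vars q \<Longrightarrow> \<sigma> v = \<tau> v"
  shows "subst \<sigma> q = subst \<tau> q"
  unfolding subst_eq_frag_extend
proof (rule frag_extend_eq)
  fix mo assume "mo \<in> Poly_Mapping.keys q"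
  then have "Poly_Mapping.keys mo \<subseteq> vars q"
    by (auto simp: vars_def)
  then show "subst_monomial \<sigma> mo = subst_monomial \<tau> mo"
    unfolding subst_monomial_def using assms by (auto intro!: prod.cong)
qed

lemma vars_Var: "vars (Var v) = {v}"
  by (simp add: vars_def Var_def)

lemma vars_of_nat: "vars (of_nat n) = {}"
  by (auto simp: vars_def in_keys_iff lookup_of_nat when_def split: if_splits)

lemma vars_diff: "vars (a - b) \<subseteq> vars a \<union> vars b"
  using keys_diff[of a b] by (auto simp: vars_def)

lemma vars_mult: "vars (a * b) \<subseteq> vars a \<union> vars b"
proof
  fix v assume "v \<in> vars (a * b)"
  then obtain mo where mo: "mo \<in> Poly_Mapping.keys (a * b)" "v \<in> Poly_Mapping.keys mo"
    unfolding vars_def by blast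
  then obtain ma mb where "mo = ma + mb" "ma \<in> Poly_Mapping.keys a" "mb \<in> Poly_Mapping.keys b"
    using keys_mult[of a b] by blast
  with mo(2) show "v \<in> vars a \<union> vars b"
    using keys_add[of ma mb] unfolding vars_def by blast
qed

lemma vars_sum: "vars (\<Sum>i\<in>I. f i) \<subseteq> (\<Union>i\<in>I. vars (f i))"
  using keys_sum[of f I] unfolding vars_def by blast

lemma vars_prod: "vars (\<Prod>i\<in>I. f i) \<subseteq> (\<Union>i\<in>I. vars (f i))"
proof (induction I rule: infinite_finite_induct)
  case (insert i I)
  then show ?case
    using vars_mult[of "f i" "prod f I"] by auto
qed (simp_all add: vars_def)

lemma vars_power: "vars (a ^ n) \<subseteq> vars a"
  using vars_prod[of "\<lambda>_. a" "{..<n}"] by (auto split: if_splits)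

lemma vars_map: "vars (Poly_Mapping.map f q) \<subseteq> vars q"
  by (auto simp: vars_def in_keys_iff Poly_Mapping.map.rep_eq)

lemma vars_subst: "vars (subst \<sigma> q) \<subseteq> (\<Union>v\<in>vars q. vars (\<sigma> v))"
proof
  fix w assume "w \<in> vars (subst \<sigma> q)"
  then obtain mo where mo: "mo \<in> Poly_Mapping.keys (subst \<sigma> q)" "w \<in> Poly_Mapping.keys mo"
    unfolding vars_def by blast
  then obtain mq where mq: "mq \<in> Poly_Mapping.keys q" "mo \<in> Poly_Mapping.keys (subst_monomial \<sigma> mq)"
    using keys_frag_extend[of "subst_monomial \<sigma>" q] by (auto simp: subst_eq_frag_extend)
  have "vars (subst_monomial \<sigma> mq) \<subseteq> (\<Union>v\<in>Poly_Mapping.keys mq. vars (\<sigma> v))"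
    unfolding subst_monomial_def using vars_prod vars_power by fastforce
  with mo(2) mq show "w \<in> (\<Union>v\<in>vars q. vars (\<sigma> v))"
    unfolding vars_def by blast
qed

section \<open>Congruences modulo \<open>p\<close> and the Frobenius lift \<open>\<Lambda>\<^sub>p\<close>\<close>

lemma mult_diff_dvd:
  fixes k :: "'a::comm_ring_1"
  assumes "k dvd a - b" "k dvd c - d"
  shows "k dvd a * c - b * d"
proof -
  have "a * c - b * d = a * (c - d) + (a - b) * d"
    by (simp add: algebra_simps)
  then show ?thesis
    using assms by simp
qed

lemma power_diff_dvd: "(k::'a::comm_ring_1) dvd a - b \<Longrightarrow> k dvd a ^ n - b ^ n"
  by (induction n) (simp_all add: mult_diff_dvd)

lemma prod_diff_dvd:
  "(\<And>i. i \<in> I \<Longrightarrow> (k::'a::comm_ring_1) dvd f i - g i) \<Longrightarrow> k dvd (\<Prod>i\<in>I. f i) - (\<Prod>i\<in>I. g i)"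
  by (induction I rule: infinite_finite_induct) (simp_all add: mult_diff_dvd)

lemma prime_dvd_power_add:
  fixes x y :: "'a::comm_ring_1"
  assumes "prime p"
  shows "of_nat p dvd (x + y) ^ p - (x ^ p + y ^ p)"
proof -
  have p: "p \<ge> 2"
    using assms prime_ge_2_nat by blast
  then have "{..p} = insert 0 (insert p {1..<p})"
    by auto
  then have "(x + y) ^ p - (x ^ p + y ^ p) = (\<Sum>k\<in>{1..<p}. of_nat (p choose k) * x ^ k * y ^ (p - k))"
    using p by (simp add: binomial_ring)
  moreover have "of_nat p dvd of_nat (p choose k) * x ^ k * y ^ (p - k)" if "k \<in> {1..<p}" for k
  proof -
    have "p dvd p choose k"
      using that assms by (intro dvd_choose_prime) auto
    then show ?thesis
      by (metis dvd_mult2 dvd_def of_nat_mult)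
  qed
  ultimately show ?thesis
    by (metis (no_types, lifting) dvd_sum)
qed

lemma subst_diff_dvd:
  assumes "\<And>v. k dvd \<sigma> v - \<tau> v"
  shows "k dvd subst \<sigma> q - subst \<tau> q"
  using subset_UNIV
proof (induction q rule: frag_induction)
  case (one mo)
  then show ?case
    unfolding subst_frag_of subst_monomial_def by (intro prod_diff_dvd power_diff_dvd assms)
next
  case (diff a b)
  have "subst \<sigma> (a - b) - subst \<tau> (a - b) = (subst \<sigma> a - subst \<tau> a) - (subst \<sigma> b - subst \<tau> b)"
    by (simp add: algebra_simps)
  then show ?case
    using diff by (metis dvd_diff)
qed simp

lemma frobenius_dvd:
  assumes "prime p"
  shows "of_nat p dvd subst (\<lambda>v. Var v ^ p) u - u ^ p"
  using subset_UNIV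
proof (induction u rule: frag_induction)
  case zero
  then show ?case
    using assms prime_gt_0_nat by (simp add: power_0_left)
next
  case (one mo)
  have "subst_monomial (\<lambda>v. Var v ^ p) mo = subst_monomial Var mo ^ p"
    by (simp add: subst_monomial_def prod_power_distrib flip: power_mult mult.commute)
  then show ?case
    by (simp add: subst_monomial_Var)
next
  case (diff a b)
  let ?F = "subst (\<lambda>v. Var v ^ p)"
  have "?F (a - b) - (a - b) ^ p = ((?F a - a ^ p) - (?F b - b ^ p)) + (a ^ p - ((a - b) ^ p + b ^ p))"
    by (simp add: algebra_simps)
  moreover have "of_nat p dvd a ^ p - ((a - b) ^ p + b ^ p)"
    using prime_dvd_power_add[OF assms, of "a - b" b] by simp
  ultimately show ?case
    using diff by (simp only: dvd_add dvd_diff)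
qed

lemma Lambda_Var:
  "Lambda p (Var v) = (case v of Inl i \<Rightarrow> xv i ^ p | Inr i \<Rightarrow> xv i ^ p + (yv i - xv i) ^ p)"
  by (simp add: Lambda_def)

lemma Lambda_eq_subst: "Lambda p u = subst (\<lambda>v. Lambda p (Var v)) u"
  by (simp add: Lambda_def)

lemma Lambda_dvd:
  assumes "prime p"
  shows "of_nat p dvd Lambda p u - u ^ p"
proof -
  let ?F = "subst (\<lambda>v. Var v ^ p)"
  have "of_nat p dvd Lambda p (Var v) - Var v ^ p" for v
  proof (cases v)
    case (Inr i)
    have "of_nat p dvd - ((xv i + (yv i - xv i)) ^ p - (xv i ^ p + (yv i - xv i) ^ p))"
      unfolding dvd_minus_iff by (rule prime_dvd_power_add[OF assms])
    then show ?thesis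
      using Inr by (simp add: Lambda_Var)
  qed (simp add: Lambda_Var)
  then have "of_nat p dvd Lambda p u - ?F u"
    unfolding Lambda_eq_subst[of p u] by (rule subst_diff_dvd)
  moreover have "Lambda p u - u ^ p = (Lambda p u - ?F u) + (?F u - u ^ p)"
    by simp
  ultimately show ?thesis
    using frobenius_dvd[OF assms, of u] by (simp only: dvd_add)
qed

lemma map_div_of_nat_mult:
  "p > 0 \<Longrightarrow> Poly_Mapping.map (\<lambda>c. c div int p) (of_nat p * q) = (q :: 'v mpoly)"
  using of_int_mult_eq_frag_cmul[of "int p" q]
  by (intro poly_mapping_eqI) (simp add: Poly_Mapping.map.rep_eq when_def)

lemma of_nat_mult_cancel:
  "p > 0 \<Longrightarrow> of_nat p * a = of_nat p * b \<Longrightarrow> (a :: 'v mpoly) = b"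
  by (metis map_div_of_nat_mult)

lemma of_nat_mult_phi:
  assumes "prime p"
  shows "of_nat p * phi p u = Lambda p u - u ^ p"
proof -
  obtain c where "Lambda p u - u ^ p = of_nat p * c"
    using Lambda_dvd[OF assms] by blast
  then show ?thesis
    using assms prime_gt_0_nat by (simp add: phi_def map_div_of_nat_mult)
qed

lemma subst_Lambda_commute:
  assumes "\<And>v. subst \<theta> (Lambda p (Var v)) = Lambda p (\<theta> v)"
  shows "subst \<theta> (Lambda p u) = Lambda p (subst \<theta> u)"
proof -
  have "subst \<theta> (Lambda p u) = subst (\<lambda>v. subst \<theta> (Lambda p (Var v))) u"
    unfolding Lambda_eq_subst[of p u] by (rule subst_subst)
  also have "\<dots> = subst (\<lambda>v. subst (\<lambda>w. Lambda p (Var w)) (\<theta> v)) u"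
    unfolding assms by (rule arg_cong[where f = "\<lambda>\<sigma>. subst \<sigma> u"]) (rule ext, rule Lambda_eq_subst)
  also have "\<dots> = Lambda p (subst \<theta> u)"
    unfolding Lambda_eq_subst[of p "subst \<theta> u"] by (rule subst_subst[symmetric])
  finally show ?thesis .
qed

lemma subst_phi_commute:
  assumes "prime p" "\<And>v. subst \<theta> (Lambda p (Var v)) = Lambda p (\<theta> v)"
  shows "subst \<theta> (phi p u) = phi p (subst \<theta> u)"
proof (rule of_nat_mult_cancel)
  show "p > 0"
    using assms(1) prime_gt_0_nat by blast
  have "of_nat p * subst \<theta> (phi p u) = subst \<theta> (of_nat p * phi p u)"
    by simp
  also have "\<dots> = Lambda p (subst \<theta> u) - subst \<theta> u ^ p"
    by (simp only: of_nat_mult_phi[OF assms(1)] subst_diff subst_power subst_Lambda_commute[OF assms(2)])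
  also have "\<dots> = of_nat p * phi p (subst \<theta> u)"
    by (simp only: of_nat_mult_phi[OF assms(1)])
  finally show "of_nat p * subst \<theta> (phi p u) = of_nat p * phi p (subst \<theta> u)" .
qed

lemma vars_phi_Inl:
  assumes "vars u \<subseteq> Inl ` I"
  shows "vars (phi p u) \<subseteq> Inl ` I"
proof -
  have "vars (Lambda p u) \<subseteq> (\<Union>v\<in>vars u. vars (Lambda p (Var v)))"
    unfolding Lambda_eq_subst[of p u] by (rule vars_subst)
  also have "\<dots> \<subseteq> Inl ` I"
  proof (intro UN_least)
    fix v assume "v \<in> vars u"
    then obtain i where i: "v = Inl i" "i \<in> I"
      using assms by blast
    have "vars (xv i ^ p) \<subseteq> {Inl i}"
      using vars_power[of "xv i" p] by (simp add: vars_Var)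
    then show "vars (Lambda p (Var v)) \<subseteq> Inl ` I"
      using i by (simp add: Lambda_Var) blast
  qed
  finally have "vars (Lambda p u) \<subseteq> Inl ` I" .
  moreover have "vars (u ^ p) \<subseteq> Inl ` I"
    using assms vars_power[of u p] by (rule order_trans[rotated])
  ultimately have "vars (Lambda p u - u ^ p) \<subseteq> Inl ` I"
    using vars_diff[of "Lambda p u" "u ^ p"] by blast
  then show ?thesis
    unfolding phi_def using vars_map by (rule order_trans[rotated])
qed

section \<open>Coefficients with respect to a set of variables\<close>

lemma lookup_frag_of_mult:
  fixes a k :: "'v \<Rightarrow>\<^sub>0 nat"
  shows "Poly_Mapping.lookup (frag_of a * q) k =
    (if \<forall>v. Poly_Mapping.lookup a v \<le> Poly_Mapping.lookup k v then Poly_Mapping.lookup q (k - a) else 0)"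
  using subset_UNIV
proof (induction q rule: frag_induction)
  case (one b)
  have "k = a + b \<longleftrightarrow> (\<forall>v. Poly_Mapping.lookup a v \<le> Poly_Mapping.lookup k v) \<and> k - a = b"
    by (auto simp: poly_mapping_eq_iff fun_eq_iff lookup_add minus_poly_mapping.rep_eq)
      (metis le_add_diff_inverse)
  then show ?case
    by (simp add: mult_single)
next
  case (diff q1 q2)
  then show ?case
    by (simp add: right_diff_distrib lookup_minus)
qed simp

text \<open>Regarding \<open>q\<close> as a polynomial in the variables \<open>Y\<close> with coefficients in the remaining
  ones, \<open>partial_coeff Y t q\<close> is the coefficient of the monomial \<open>t\<close> (meant to be supported in \<open>Y\<close>).\<close>

definition partial_coeff :: "'v set \<Rightarrow> ('v \<Rightarrow>\<^sub>0 nat) \<Rightarrow> 'v mpoly \<Rightarrow> 'v mpoly" where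
  "partial_coeff Y t q = Abs_poly_mapping (\<lambda>mo.
     if \<forall>v\<in>Y. Poly_Mapping.lookup mo v = 0 then Poly_Mapping.lookup q (mo + t) else 0)"

lemma lookup_partial_coeff:
  "Poly_Mapping.lookup (partial_coeff Y t q) mo =
    (if \<forall>v\<in>Y. Poly_Mapping.lookup mo v = 0 then Poly_Mapping.lookup q (mo + t) else 0)"
proof -
  have "{mo. (if \<forall>v\<in>Y. Poly_Mapping.lookup mo v = 0 then Poly_Mapping.lookup q (mo + t) else 0) \<noteq> 0}
      \<subseteq> (\<lambda>mo. mo + t) -` Poly_Mapping.keys q"
    by (auto simp: in_keys_iff split: if_splits)
  moreover have "finite ((\<lambda>mo. mo + t) -` Poly_Mapping.keys q)"
    by (rule finite_vimageI) (auto simp: inj_on_def)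
  ultimately show ?thesis
    unfolding partial_coeff_def by (simp add: finite_subset)
qed

lemma partial_coeff_0 [simp]: "partial_coeff Y t 0 = 0"
  by (rule poly_mapping_eqI) (simp add: lookup_partial_coeff)

lemma partial_coeff_add [simp]: "partial_coeff Y t (a + b) = partial_coeff Y t a + partial_coeff Y t b"
  by (rule poly_mapping_eqI) (simp add: lookup_partial_coeff lookup_add)

lemma partial_coeff_diff [simp]: "partial_coeff Y t (a - b) = partial_coeff Y t a - partial_coeff Y t b"
  by (rule poly_mapping_eqI) (simp add: lookup_partial_coeff lookup_minus)

lemma partial_coeff_sum [simp]: "partial_coeff Y t (\<Sum>i\<in>I. f i) = (\<Sum>i\<in>I. partial_coeff Y t (f i))"
  by (induction I rule: infinite_finite_induct) simp_all

lemma partial_coeff_mult_free: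
  assumes "vars G \<inter> Y = {}" "Poly_Mapping.keys t \<subseteq> Y"
  shows "partial_coeff Y t (G * q) = G * partial_coeff Y t q"
proof -
  have "v \<notin> Poly_Mapping.keys a" if "a \<in> Poly_Mapping.keys G" "v \<in> Y" for a v
    using assms(1) that unfolding vars_def by blast
  then have "Poly_Mapping.keys G \<subseteq> {a. \<forall>v\<in>Y. Poly_Mapping.lookup a v = 0}"
    by (auto simp: in_keys_iff)
  then show ?thesis
  proof (induction G rule: frag_induction)
    case (one a)
    then have a: "Poly_Mapping.lookup a v = 0" if "v \<in> Y" for v
      using that by blast
    have t: "Poly_Mapping.lookup t v = 0" if "v \<notin> Y" for v
      using assms(2) that by (auto simp: in_keys_iff)
    show ?case
    proof (rule poly_mapping_eqI)
      fix mo
      show "Poly_Mapping.lookup (partial_coeff Y t (frag_of a * q)) mo =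
          Poly_Mapping.lookup (frag_of a * partial_coeff Y t q) mo"
      proof (cases "\<forall>v\<in>Y. Poly_Mapping.lookup mo v = 0")
        case True
        have "Poly_Mapping.lookup a v \<le> Poly_Mapping.lookup mo v + Poly_Mapping.lookup t v
            \<longleftrightarrow> Poly_Mapping.lookup a v \<le> Poly_Mapping.lookup mo v" for v
          using a[of v] t[of v] by (cases "v \<in> Y") simp_all
        moreover have "mo + t - a = mo - a + t"
        proof (rule poly_mapping_eqI)
          fix v
          show "Poly_Mapping.lookup (mo + t - a) v = Poly_Mapping.lookup (mo - a + t) v"
            using a[of v] t[of v] by (cases "v \<in> Y") (simp_all add: lookup_add minus_poly_mapping.rep_eq)
        qed
        ultimately show ?thesis
          using True by (simp add: lookup_partial_coeff lookup_frag_of_mult lookup_add minus_poly_mapping.rep_eq)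
      next
        case False
        then show ?thesis
          using a by (auto simp: lookup_partial_coeff lookup_frag_of_mult minus_poly_mapping.rep_eq)
      qed
    qed
  qed (simp_all add: left_diff_distrib)
qed

lemma partial_coeff_monomial_mult:
  assumes "Poly_Mapping.keys u \<subseteq> Y"
  shows "partial_coeff Y t (frag_of u * q) =
    (if \<forall>v. Poly_Mapping.lookup u v \<le> Poly_Mapping.lookup t v then partial_coeff Y (t - u) q else 0)"
proof (rule poly_mapping_eqI)
  fix mo
  have u: "Poly_Mapping.lookup u v = 0" if "v \<notin> Y" for v
    using assms that by (auto simp: in_keys_iff)
  show "Poly_Mapping.lookup (partial_coeff Y t (frag_of u * q)) mo =
      Poly_Mapping.lookup (if \<forall>v. Poly_Mapping.lookup u v \<le> Poly_Mapping.lookup t v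
        then partial_coeff Y (t - u) q else 0) mo"
  proof (cases "\<forall>v\<in>Y. Poly_Mapping.lookup mo v = 0")
    case True
    have "Poly_Mapping.lookup u v \<le> Poly_Mapping.lookup mo v + Poly_Mapping.lookup t v
        \<longleftrightarrow> Poly_Mapping.lookup u v \<le> Poly_Mapping.lookup t v" for v
      using True u[of v] by (cases "v \<in> Y") simp_all
    moreover have "mo + t - u = mo + (t - u)"
    proof (rule poly_mapping_eqI)
      fix v
      show "Poly_Mapping.lookup (mo + t - u) v = Poly_Mapping.lookup (mo + (t - u)) v"
        using True u[of v] by (cases "v \<in> Y") (simp_all add: lookup_add minus_poly_mapping.rep_eq)
    qed
    ultimately show ?thesis
      using True by (simp add: lookup_partial_coeff lookup_frag_of_mult lookup_add)
  qed (auto simp: lookup_partial_coeff)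
qed

lemma partial_coeff_monomial_mult_eq_0:
  assumes "Poly_Mapping.keys u \<subseteq> Y" "Poly_Mapping.lookup t v < Poly_Mapping.lookup u v"
  shows "partial_coeff Y t (frag_of u * q) = 0"
proof -
  have "\<not> (\<forall>v. Poly_Mapping.lookup u v \<le> Poly_Mapping.lookup t v)"
    using assms(2) by (meson not_le)
  then show ?thesis
    using partial_coeff_monomial_mult[OF assms(1), of t q] by (simp only: if_not_P if_False)
qed

lemma partial_coeff_zero_exp:
  "partial_coeff Y 0 q = subst (\<lambda>v. if v \<in> Y then 0 else Var v) q"
  using subset_UNIV
proof (induction q rule: frag_induction)
  case (one mo)
  show ?case
  proof (cases "\<forall>v\<in>Y. Poly_Mapping.lookup mo v = 0")
    case True
    then have "subst_monomial (\<lambda>v. if v \<in> Y then 0 else Var v) mo = subst_monomial Var mo"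
      unfolding subst_monomial_def by (intro prod.cong) (auto simp: in_keys_iff)
    moreover have "partial_coeff Y 0 (frag_of mo) = frag_of mo"
      using True by (intro poly_mapping_eqI) (auto simp: lookup_partial_coeff)
    ultimately show ?thesis
      by (simp add: subst_monomial_Var)
  next
    case False
    then obtain v where "v \<in> Y" "v \<in> Poly_Mapping.keys mo"
      by (auto simp: in_keys_iff)
    then have "subst_monomial (\<lambda>v. if v \<in> Y then 0 else Var v) mo = 0"
      unfolding subst_monomial_def by (intro prod_zero) (auto simp: in_keys_iff power_0_left)
    moreover have "partial_coeff Y 0 (frag_of mo) = 0"
      using False by (intro poly_mapping_eqI) (auto simp: lookup_partial_coeff)
    ultimately show ?thesis
      by simp
  qed
qed simp_all

definition const_exp :: "'v set \<Rightarrow> nat \<Rightarrow> ('v \<Rightarrow>\<^sub>0 nat)" where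
  "const_exp W K = (\<Sum>v\<in>W. Poly_Mapping.single v K)"

lemma lookup_const_exp: "finite W \<Longrightarrow> Poly_Mapping.lookup (const_exp W K) v = (if v \<in> W then K else 0)"
  by (simp add: const_exp_def lookup_sum lookup_single when_def)

lemma keys_const_exp: "Poly_Mapping.keys (const_exp W K) \<subseteq> W"
  unfolding const_exp_def using keys_sum[of "\<lambda>v. Poly_Mapping.single v K" W] by auto

lemma const_exp_0 [simp]: "const_exp W 0 = 0"
  by (simp add: const_exp_def)

lemma Var_prod_power: "(\<Prod>v\<in>W. Var v) ^ K = frag_of (const_exp W K)"
proof -
  have "(\<Prod>v\<in>W. Var v) ^ K = (\<Prod>v\<in>W. Var v ^ K)"
    by (rule prod_power_distrib)
  then show ?thesis
    by (simp add: Var_power prod_frag_of const_exp_def)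
qed

lemma partial_coeff_const_exp_mult:
  assumes "finite W" "W \<noteq> {}" "W \<subseteq> Y"
  shows "partial_coeff Y (const_exp W K) (frag_of (const_exp W j) * q) =
    (if j \<le> K then partial_coeff Y (const_exp W (K - j)) q else 0)"
proof -
  have diff: "const_exp W K - const_exp W j = const_exp W (K - j)"
    using assms(1) by (intro poly_mapping_eqI) (simp add: lookup_const_exp minus_poly_mapping.rep_eq)
  have le: "(\<forall>v. Poly_Mapping.lookup (const_exp W j) v \<le> Poly_Mapping.lookup (const_exp W K) v) \<longleftrightarrow> j \<le> K"
  proof
    obtain w where "w \<in> W"
      using assms(2) by blast
    moreover assume "\<forall>v. Poly_Mapping.lookup (const_exp W j) v \<le> Poly_Mapping.lookup (const_exp W K) v"
    ultimately show "j \<le> K"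
      using assms(1) by (auto simp: lookup_const_exp dest: spec[of _ w])
  qed (simp add: lookup_const_exp assms(1))
  have "Poly_Mapping.keys (const_exp W j) \<subseteq> Y"
    using keys_const_exp assms(3) by (rule order_trans)
  from partial_coeff_monomial_mult[OF this, of "const_exp W K" q] show ?thesis
    unfolding diff le .
qed

section \<open>Ideal membership and top Cech classes\<close>

lemma in_ideal_UNIV_iff: "in_ideal UNIV G q \<longleftrightarrow> (\<exists>c. q = (\<Sum>g\<in>G. c g * g))"
  by (simp add: in_ideal_def)

lemma in_ideal_UNIV_I: "q = (\<Sum>g\<in>G. c g * g) \<Longrightarrow> in_ideal UNIV G q"
  by (auto simp: in_ideal_def)

lemma in_ideal_imp_UNIV: "in_ideal V G q \<Longrightarrow> in_ideal UNIV G q"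
  by (auto simp: in_ideal_def)

lemma in_ideal_mult_generator:
  assumes "g \<in> G" "finite G"
  shows "in_ideal UNIV G (a * g)"
proof -
  have "a * g = (\<Sum>h\<in>G. if h = g then a * g else 0)"
    using assms by simp
  also have "\<dots> = (\<Sum>h\<in>G. (if h = g then a else 0) * h)"
    by (rule sum.cong) simp_all
  finally show ?thesis
    by (rule in_ideal_UNIV_I)
qed

lemma in_ideal_subst:
  assumes "in_ideal UNIV G q" "\<And>g. g \<in> G \<Longrightarrow> in_ideal UNIV G' (subst \<sigma> g)"
  shows "in_ideal UNIV G' (subst \<sigma> q)"
proof -
  obtain c where q: "q = (\<Sum>g\<in>G. c g * g)"
    using assms(1) by (auto simp: in_ideal_UNIV_iff)
  have "\<forall>g\<in>G. \<exists>d. subst \<sigma> g = (\<Sum>g'\<in>G'. d g' * g')"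
    using assms(2) by (auto simp: in_ideal_UNIV_iff)
  then obtain d where d: "\<forall>g\<in>G. subst \<sigma> g = (\<Sum>g'\<in>G'. d g g' * g')"
    by metis
  have "subst \<sigma> q = (\<Sum>g\<in>G. subst \<sigma> (c g) * subst \<sigma> g)"
    unfolding q by simp
  also have "\<dots> = (\<Sum>g\<in>G. \<Sum>g'\<in>G'. subst \<sigma> (c g) * d g g' * g')"
    using d by (simp add: sum_distrib_left mult.assoc)
  also have "\<dots> = (\<Sum>g'\<in>G'. (\<Sum>g\<in>G. subst \<sigma> (c g) * d g g') * g')"
    by (subst sum.swap) (simp add: sum_distrib_right)
  finally show ?thesis
    by (rule in_ideal_UNIV_I)
qed

lemma in_ideal_partial_coeff:
  assumes "in_ideal UNIV G q" "\<And>g. g \<in> G \<Longrightarrow> vars g \<inter> Y = {}" "Poly_Mapping.keys t \<subseteq> Y"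
  shows "in_ideal UNIV G (partial_coeff Y t q)"
proof -
  obtain c where "q = (\<Sum>g\<in>G. c g * g)"
    using assms(1) by (auto simp: in_ideal_UNIV_iff)
  then have "partial_coeff Y t q = (\<Sum>g\<in>G. partial_coeff Y t (c g) * g)"
    using assms(2,3) by (simp add: mult.commute partial_coeff_mult_free)
  then show ?thesis
    by (rule in_ideal_UNIV_I)
qed

lemma prod_list_map_upt: "prod_list (map a [0..<n]) = (\<Prod>i<n. a i)"
  by (simp add: atLeast0LessThan flip: prod.distinct_set_conv_list)

lemma cech_top_class_zero_upt:
  "cech_top_class_zero V G (map a [0..<n]) k r \<longleftrightarrow>
    (\<exists>s t ms. (\<forall>i<n. vars (ms i) \<subseteq> V) \<and>
       in_ideal V G ((\<Prod>i<n. a i) ^ t * (r * (\<Prod>i<n. a i) ^ s - (\<Prod>i<n. a i) ^ k * (\<Sum>i<n. ms i * a i ^ s))))"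
proof -
  have "(\<Sum>i<length (map a [0..<n]). ms i * (map a [0..<n] ! i) ^ s) = (\<Sum>i<n. ms i * a i ^ s)" for ms s
    by (rule sum.cong) simp_all
  then show ?thesis
    by (simp add: cech_top_class_zero_def prod_list_map_upt del: upt_Suc)
qed

lemma cech_top_class_zero_imp_UNIV:
  "cech_top_class_zero V G as k r \<Longrightarrow> cech_top_class_zero UNIV G as k r"
  unfolding cech_top_class_zero_def by (meson in_ideal_imp_UNIV subset_UNIV)

lemma cech_top_class_zero_restrict:
  assumes "cech_top_class_zero UNIV G as k r"
    and "\<And>g. g \<in> G \<Longrightarrow> vars g \<subseteq> V" "\<And>a. a \<in> set as \<Longrightarrow> vars a \<subseteq> V" "vars r \<subseteq> V"
  shows "cech_top_class_zero V G as k r"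
proof -
  let ?\<rho> = "subst (\<lambda>v. if v \<in> V then Var v else 0)"
  have fixed: "?\<rho> q = q" if "vars q \<subseteq> V" for q
  proof -
    have "?\<rho> q = subst Var q"
      by (rule subst_cong) (use that in auto)
    then show ?thesis
      by simp
  qed
  have vars_\<rho>: "vars (?\<rho> q) \<subseteq> V" for q
    using vars_subst[of "\<lambda>v. if v \<in> V then Var v else 0" q] by (auto simp: vars_Var vars_def[of 0] split: if_splits)
  define A where "A = prod_list as"
  define n where "n = length as"
  obtain s t ms c where eq: "A ^ t * (r * A ^ s - A ^ k * (\<Sum>i<n. ms i * (as ! i) ^ s)) = (\<Sum>g\<in>G. c g * g)"
    using assms(1) unfolding cech_top_class_zero_def in_ideal_def A_def n_def Let_def by blast
  have as: "?\<rho> (as ! i) = as ! i" if "i < n" for i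
    using that assms(3) fixed unfolding n_def by simp
  have "?\<rho> A = A"
    unfolding A_def subst_prod_list using assms(3) fixed by (simp add: map_idI)
  then have "?\<rho> (A ^ t * (r * A ^ s - A ^ k * (\<Sum>i<n. ms i * (as ! i) ^ s)))
      = A ^ t * (r * A ^ s - A ^ k * (\<Sum>i<n. ?\<rho> (ms i) * (as ! i) ^ s))"
    using as assms(4) fixed by simp
  moreover have "?\<rho> (\<Sum>g\<in>G. c g * g) = (\<Sum>g\<in>G. ?\<rho> (c g) * g)"
    using assms(2) fixed by simp
  ultimately have "A ^ t * (r * A ^ s - A ^ k * (\<Sum>i<n. ?\<rho> (ms i) * (as ! i) ^ s)) = (\<Sum>g\<in>G. ?\<rho> (c g) * g)"
    using eq by metis
  then show ?thesis
    unfolding cech_top_class_zero_def in_ideal_def Let_def A_def n_def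
    by (intro exI[of _ s] exI[of _ t] exI[of _ "\<lambda>i. ?\<rho> (ms i)"] exI[of _ "\<lambda>g. ?\<rho> (c g)"] conjI ballI allI impI vars_\<rho>)
qed

section \<open>Specialising the diagonal class\<close>

text \<open>\<open>y\<^sub>i \<mapsto> x\<^sub>i\<close>, and \<open>y\<^sub>i - x\<^sub>i \<mapsto> x\<^sub>i\<close> for \<open>i \<le> m\<close>, \<open>y\<^sub>i - x\<^sub>i \<mapsto> y\<^sub>i\<close> for \<open>i > m\<close>.\<close>

definition split_subst :: "nat \<Rightarrow> nat + nat \<Rightarrow> (nat + nat) mpoly" where
  "split_subst m v = (case v of Inl i \<Rightarrow> if i \<le> m then 0 else xv i - yv i | Inr i \<Rightarrow> xv i)"

lemma subst_split_subst_diff: "subst (split_subst m) (yv i - xv i) = (if i \<le> m then xv i else yv i)"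
  by (simp add: split_subst_def)

locale split_polynomial =
  fixes d m p :: nat and f g h :: "nat mpoly" and c :: "nat \<Rightarrow> nat mpoly"
  assumes prime_p: "prime p"
    and m_less_d: "m < d"
    and vars_f: "vars f \<subseteq> {..d}"
    and vars_c: "\<forall>i\<le>m. vars (c i) \<subseteq> {..d}"
    and g_eq: "g = (\<Sum>i\<le>m. c i * Var i)"
    and vars_h: "vars h \<subseteq> {m+1..d}"
    and f_eq: "f = g + of_nat p * h"
begin

abbreviation fx where "fx \<equiv> subst (\<lambda>i. xv i) f"
abbreviation fy where "fy \<equiv> subst (\<lambda>i. yv i) f"
abbreviation gx where "gx \<equiv> subst (\<lambda>i. xv i) g"
abbreviation x_prod where "x_prod \<equiv> \<Prod>i<m+1. xv i"
abbreviation y_prod where "y_prod \<equiv> \<Prod>i\<in>{m<..d}. yv i"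
abbreviation y_coeff where "y_coeff K \<equiv> partial_coeff (range Inr) (const_exp (Inr ` {m<..d}) K)"

lemma p_pos: "p > 0"
  using prime_p prime_gt_0_nat by blast

lemma subst_g_eq_0: "(\<And>i. i \<le> m \<Longrightarrow> \<tau> i = 0) \<Longrightarrow> subst \<tau> g = 0"
  by (simp add: g_eq)

lemma subst_h_cong: "(\<And>i. m < i \<Longrightarrow> \<tau> i = \<tau>' i) \<Longrightarrow> subst \<tau> h = subst \<tau>' h"
  by (rule subst_cong) (use vars_h in auto)

lemma subst_f_eq: "subst \<tau> f = subst \<tau> g + of_nat p * subst \<tau> h"
  by (simp add: f_eq)

lemma split_subst_fx: "subst (split_subst m) fx = of_nat p * subst (\<lambda>i. xv i - yv i) h"
proof -
  have "subst (\<lambda>i. split_subst m (Inl i)) h = subst (\<lambda>i. xv i - yv i) h"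
    by (rule subst_h_cong) (simp add: split_subst_def)
  moreover have "subst (\<lambda>i. split_subst m (Inl i)) g = 0"
    by (rule subst_g_eq_0) (simp add: split_subst_def)
  ultimately show ?thesis
    by (simp add: subst_subst subst_f_eq[of "\<lambda>i. split_subst m (Inl i)"])
qed

lemma split_subst_fy: "subst (split_subst m) fy = fx"
  by (simp add: subst_subst split_subst_def)

lemma in_ideal_split_subst:
  assumes "in_ideal UNIV {fx, fy, of_nat p} q"
  shows "in_ideal UNIV {fx, of_nat p} (subst (split_subst m) q)"
proof (rule in_ideal_subst[OF assms])
  fix G assume "G \<in> {fx, fy, of_nat p}"
  then consider "G = fx" | "G = fy" | "G = of_nat p"
    by blast
  then show "in_ideal UNIV {fx, of_nat p} (subst (split_subst m) G)"
  proof cases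
    case 1
    then show ?thesis
      using in_ideal_mult_generator[of "of_nat p" _ "subst (\<lambda>i. xv i - yv i) h"]
      by (simp add: split_subst_fx mult.commute)
  next
    case 2
    then show ?thesis
      using in_ideal_mult_generator[of fx _ 1] by (simp add: split_subst_fy)
  next
    case 3
    then show ?thesis
      using in_ideal_mult_generator[of "of_nat p" "{fx, of_nat p}" 1] by simp
  qed
qed

lemma subst_split_phi:
  "subst (\<lambda>v. subst (\<lambda>w. if w \<in> range Inr then 0 else Var w) (split_subst m v)) (phi p (fy - fx))
    = phi p gx"
  (is "subst ?\<theta> _ = _")
proof -
  have \<theta>: "?\<theta> v = (case v of Inl i \<Rightarrow> if i \<le> m then 0 else xv i | Inr i \<Rightarrow> xv i)" for v
    by (cases v) (auto simp: split_subst_def)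
  have commute: "subst ?\<theta> (Lambda p (Var v)) = Lambda p (?\<theta> v)" for v
    using p_pos by (cases v) (auto simp: \<theta> Lambda_def power_0_left)
  have specialize: "subst ?\<theta> (fy - fx) = gx"
  proof -
    define \<zeta> where "\<zeta> = (\<lambda>i. if i \<le> m then 0 else xv i)"
    have "subst \<zeta> g = 0"
      by (rule subst_g_eq_0) (simp add: \<zeta>_def)
    moreover have "subst \<zeta> h = subst (\<lambda>i. xv i) h"
      by (rule subst_h_cong) (simp add: \<zeta>_def)
    moreover have "subst ?\<theta> fx = subst \<zeta> f"
      by (simp add: subst_subst \<theta> \<zeta>_def)
    ultimately have "subst ?\<theta> fx = of_nat p * subst (\<lambda>i. xv i) h"
      by (simp add: subst_f_eq[of \<zeta>])
    moreover have "subst ?\<theta> fy = fx"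
      by (simp add: subst_subst \<theta>)
    ultimately show ?thesis
      by (simp add: subst_f_eq[of "\<lambda>i. xv i"])
  qed
  show ?thesis
    unfolding subst_phi_commute[OF prime_p commute] specialize ..
qed

lemma y_prod_power: "y_prod ^ K = frag_of (const_exp (Inr ` {m<..d}) K)"
proof -
  have "y_prod = (\<Prod>v\<in>Inr ` {m<..d}. Var v)"
    by (simp add: prod.reindex)
  then show ?thesis
    by (simp add: Var_prod_power)
qed

lemma y_coeff_y_prod_power_mult: "y_coeff K (y_prod ^ j * q) = (if j \<le> K then y_coeff (K - j) q else 0)"
  unfolding y_prod_power using m_less_d by (intro partial_coeff_const_exp_mult) auto

lemma y_coeff_mult_x:
  assumes "vars G \<subseteq> range Inl"
  shows "y_coeff K (G * q) = G * y_coeff K q"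
proof (rule partial_coeff_mult_free)
  show "vars G \<inter> range Inr = {}"
    using assms by blast
  show "Poly_Mapping.keys (const_exp (Inr ` {m<..d}) K) \<subseteq> range Inr"
    using keys_const_exp by (rule order_trans) blast
qed

lemma vars_xv_power: "vars (xv i ^ n) \<subseteq> range Inl"
  by (rule order_trans[OF vars_power]) (simp add: vars_Var)

lemma vars_x_prod_power: "vars (x_prod ^ n) \<subseteq> range Inl"
  using vars_power[of x_prod n] vars_prod[of "\<lambda>i. xv i" "{..<m+1}"] by (auto simp: vars_Var)

lemma split_subst_diff_prod: "subst (split_subst m) (\<Prod>i<d+1. yv i - xv i) = x_prod * y_prod"
proof -
  let ?a = "\<lambda>i. if i \<le> m then xv i else yv i"
  have split: "{..<d+1} = {..<m+1} \<union> {m<..d}"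
    using m_less_d by auto
  have "subst (split_subst m) (\<Prod>i<d+1. yv i - xv i) = (\<Prod>i<d+1. ?a i)"
    by (simp only: subst_prod subst_split_subst_diff)
  also have "\<dots> = (\<Prod>i<m+1. ?a i) * (\<Prod>i\<in>{m<..d}. ?a i)"
    unfolding split by (rule prod.union_disjoint) auto
  also have "\<dots> = x_prod * y_prod"
    by (intro arg_cong2[where f = "(*)"] prod.cong) auto
  finally show ?thesis .
qed

lemma y_coeff_term:
  assumes "i \<le> d"
  shows "y_coeff (t + s) (y_prod ^ (t + p) * (q * subst (split_subst m) (yv i - xv i) ^ s)) =
    (if i \<le> m then (if p \<le> s then y_coeff (s - p) q else 0) * xv i ^ s else 0)"
proof (cases "i \<le> m")
  case True
  then have "y_prod ^ (t + p) * (q * subst (split_subst m) (yv i - xv i) ^ s) = xv i ^ s * (y_prod ^ (t + p) * q)"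
    by (simp only: subst_split_subst_diff True if_True) (simp add: mult_ac)
  then show ?thesis
    using True by (simp only: y_coeff_mult_x[OF vars_xv_power] y_coeff_y_prod_power_mult) (simp add: mult.commute)
next
  case False
  let ?u = "Poly_Mapping.single (Inr i) s + const_exp (Inr ` {m<..d}) (t + p)"
  have "y_prod ^ (t + p) * (q * subst (split_subst m) (yv i - xv i) ^ s) = frag_of ?u * q"
    by (simp only: subst_split_subst_diff False if_False) (simp add: y_prod_power Var_power mult_single mult_ac)
  moreover have "y_coeff (t + s) (frag_of ?u * q) = 0"
  proof (rule partial_coeff_monomial_mult_eq_0)
    show "Poly_Mapping.keys ?u \<subseteq> range Inr"
      using keys_add[of "Poly_Mapping.single (Inr i) s" "const_exp (Inr ` {m<..d}) (t + p)"]
        keys_const_exp[of "Inr ` {m<..d}" "t + p"] by (auto split: if_splits)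
    show "Poly_Mapping.lookup (const_exp (Inr ` {m<..d}) (t + s)) (Inr i) < Poly_Mapping.lookup ?u (Inr i)"
      using False assms p_pos by (simp add: lookup_const_exp lookup_add lookup_single)
  qed
  ultimately show ?thesis
    using False by simp
qed

lemma y_coeff_split_phi:
  "y_coeff K (y_prod ^ K * subst (split_subst m) (phi p (fy - fx))) = phi p gx"
  by (simp add: y_coeff_y_prod_power_mult partial_coeff_zero_exp subst_subst subst_split_phi)

lemma y_coeff_split_cech_element:
  fixes ms :: "nat \<Rightarrow> (nat + nat) mpoly"
  defines "A \<equiv> \<Prod>i<d+1. yv i - xv i"
  shows "y_coeff (t + s) (subst (split_subst m)
      (A ^ t * (phi p (fy - fx) * A ^ s - A ^ p * (\<Sum>i<d+1. ms i * (yv i - xv i) ^ s))))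
    = x_prod ^ t * (phi p gx * x_prod ^ s - x_prod ^ p *
        (\<Sum>i<m+1. (if p \<le> s then y_coeff (s - p) (subst (split_subst m) (ms i)) else 0) * xv i ^ s))"
proof -
  let ?\<psi> = "subst (split_subst m)"
  let ?M = "\<lambda>i. if p \<le> s then y_coeff (s - p) (?\<psi> (ms i)) else 0"
  let ?S = "\<Sum>i<d+1. ?\<psi> (ms i) * ?\<psi> (yv i - xv i) ^ s"
  have "?\<psi> (A ^ t * (phi p (fy - fx) * A ^ s - A ^ p * (\<Sum>i<d+1. ms i * (yv i - xv i) ^ s)))
      = x_prod ^ (t + s) * (y_prod ^ (t + s) * ?\<psi> (phi p (fy - fx))) - x_prod ^ (t + p) * (y_prod ^ (t + p) * ?S)"
    unfolding A_def by (simp only: subst_mult subst_diff subst_power subst_sum split_subst_diff_prod)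
      (simp add: power_mult_distrib power_add algebra_simps)
  then have "y_coeff (t + s) (?\<psi> (A ^ t * (phi p (fy - fx) * A ^ s - A ^ p * (\<Sum>i<d+1. ms i * (yv i - xv i) ^ s))))
      = x_prod ^ (t + s) * phi p gx - x_prod ^ (t + p) * y_coeff (t + s) (y_prod ^ (t + p) * ?S)"
    by (simp only: partial_coeff_diff y_coeff_mult_x[OF vars_x_prod_power] y_coeff_split_phi)
  also have "y_coeff (t + s) (y_prod ^ (t + p) * ?S) = (\<Sum>i<d+1. if i \<le> m then ?M i * xv i ^ s else 0)"
    unfolding sum_distrib_left partial_coeff_sum by (rule sum.cong[OF refl], rule y_coeff_term) simp
  also have "\<dots> = (\<Sum>i<m+1. ?M i * xv i ^ s)"
    using m_less_d by (intro sum.mono_neutral_cong_right) auto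
  finally show ?thesis
    by (simp add: power_add algebra_simps)
qed

lemma vars_fx: "vars fx \<subseteq> Inl ` {..d}"
  using vars_subst[of "\<lambda>i. xv i" f] vars_f by (auto simp: vars_Var)

lemma vars_gx: "vars gx \<subseteq> Inl ` {..d}"
proof -
  have "vars g \<subseteq> (\<Union>i\<le>m. vars (c i * Var i))"
    unfolding g_eq by (rule vars_sum)
  also have "\<dots> \<subseteq> {..d}"
    using vars_c vars_mult m_less_d by (fastforce simp: vars_Var)
  finally show ?thesis
    using vars_subst[of "\<lambda>i. xv i" g] by (fastforce simp: vars_Var)
qed

lemma specialize_cech_class:
  assumes "cech_top_class_zero UNIV {fx, fy, of_nat p} (map (\<lambda>i. yv i - xv i) [0..<d+1]) p (phi p (fy - fx))"
  shows "cech_top_class_zero UNIV {fx, of_nat p} (map xv [0..<m+1]) p (phi p gx)"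
proof -
  obtain s t ms where "in_ideal UNIV {fx, fy, of_nat p}
      ((\<Prod>i<d+1. yv i - xv i) ^ t * (phi p (fy - fx) * (\<Prod>i<d+1. yv i - xv i) ^ s
        - (\<Prod>i<d+1. yv i - xv i) ^ p * (\<Sum>i<d+1. ms i * (yv i - xv i) ^ s)))"
    using assms unfolding cech_top_class_zero_upt by blast
  then have "in_ideal UNIV {fx, of_nat p} (y_coeff (t + s) (subst (split_subst m)
      ((\<Prod>i<d+1. yv i - xv i) ^ t * (phi p (fy - fx) * (\<Prod>i<d+1. yv i - xv i) ^ s
        - (\<Prod>i<d+1. yv i - xv i) ^ p * (\<Sum>i<d+1. ms i * (yv i - xv i) ^ s)))))"
  proof (rule in_ideal_partial_coeff[OF in_ideal_split_subst])
    show "vars G \<inter> range Inr = {}" if "G \<in> {fx, of_nat p}" for G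
      using that vars_fx by (auto simp: vars_of_nat)
    show "Poly_Mapping.keys (const_exp (Inr ` {m<..d}) (t + s)) \<subseteq> range Inr"
      using keys_const_exp by (rule order_trans) blast
  qed
  then show ?thesis
    unfolding y_coeff_split_cech_element cech_top_class_zero_upt by (intro exI conjI) auto
qed

end

theorem lemma8p3:
  fixes d m p :: nat and f g h :: "nat mpoly"
  assumes "prime p"
    and "m < d"
    and "vars f \<subseteq> {..d}"
    and "\<exists>c. (\<forall>i\<le>m. vars (c i) \<subseteq> {..d}) \<and> g = (\<Sum>i\<le>m. c i * Var i)"
    and "vars h \<subseteq> {m+1..d}"
    and "f = g + of_nat p * h"
    and "\<not> cech_top_class_zero (Inl ` {..d}) {subst (\<lambda>i. xv i) f, of_nat p}
            (map xv [0..<m+1]) p (phi p (subst (\<lambda>i. xv i) g))"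
  shows "\<not> cech_top_class_zero (Inl ` {..d} \<union> Inr ` {..d})
            {subst (\<lambda>i. xv i) f, subst (\<lambda>i. yv i) f, of_nat p}
            (map (\<lambda>i. yv i - xv i) [0..<d+1]) p
            (phi p (subst (\<lambda>i. yv i) f - subst (\<lambda>i. xv i) f))"
proof
  obtain c where c: "\<forall>i\<le>m. vars (c i) \<subseteq> {..d}" "g = (\<Sum>i\<le>m. c i * Var i)"
    using assms(4) by blast
  interpret split_polynomial d m p f g h c
    using assms(1-3,5,6) c by unfold_locales
  assume "cech_top_class_zero (Inl ` {..d} \<union> Inr ` {..d}) {fx, fy, of_nat p}
    (map (\<lambda>i. yv i - xv i) [0..<d+1]) p (phi p (fy - fx))"
  then have "cech_top_class_zero UNIV {fx, of_nat p} (map xv [0..<m+1]) p (phi p gx)"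
    by (intro specialize_cech_class cech_top_class_zero_imp_UNIV)
  then have "cech_top_class_zero (Inl ` {..d}) {fx, of_nat p} (map xv [0..<m+1]) p (phi p gx)"
    by (rule cech_top_class_zero_restrict)
      (use vars_fx vars_phi_Inl[OF vars_gx] m_less_d in \<open>auto simp: vars_of_nat vars_Var\<close>)
  with assms(7) show False
    by contradiction
qed

end
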